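(* Let $\gamma,h>0$, $\eta=e^{-\gamma h}$, $n\ge1$, and for $k\in\{0,\dots,n\}$ define \[ \alpha_k=(1-\eta^2)(1-\eta^{2n})k-2\eta(1+\eta^{n-k})(1-\eta^k)(1-\eta^n), \] \[ \beta_k=(1-\eta^2)\Bigl(\eta^{-k}(1-\eta^k)^2n+(1-\eta^n)^2k\Bigr)-2\eta^{1-k}(1-\eta^k)(1-\eta^n)(2-\eta^k-\eta^n). \] Then both $(\alpha_k)_{0\le k\le n}$ and $(\beta_k)_{0\le k\le n}$ are nondecreasing sequences. *)

theory Defs
  imports Complex_Main
begin

definition alpha_seq :: "real \<Rightarrow> nat \<Rightarrow> nat \<Rightarrow> real" where
  "alpha_seq \<eta> n k =
     (1 - \<eta>^2) * (1 - \<eta>^(2*n)) * real k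
     - 2 * \<eta> * (1 + \<eta>^(n - k)) * (1 - \<eta>^k) * (1 - \<eta>^n)"

definition beta_seq :: "real \<Rightarrow> nat \<Rightarrow> nat \<Rightarrow> real" where
  "beta_seq \<eta> n k =
     (1 - \<eta>^2) * ((\<eta> powi (- int k)) * (1 - \<eta>^k)^2 * real n + (1 - \<eta>^n)^2 * real k)
     - 2 * (\<eta> powi (1 - int k)) * (1 - \<eta>^k) * (1 - \<eta>^n) * (2 - \<eta>^k - \<eta>^n)"

end

theory Submission
  imports Defs
begin

text \<open>
  Both sequences are handled by factoring their forward differences.
  For \<open>\<alpha>\<close> the difference is \<open>(1 - \<eta>\<^sup>n)(1 - \<eta>)\<close> times a quantity that is nonnegative
  by two instances of \<open>(1 - x)(1 - y) \<ge> 0\<close>.  For \<open>\<beta>\<close> the difference, multiplied by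
  \<open>\<eta>\<^sup>k\<^sup>+\<^sup>1(1 + \<eta>\<^sup>n)\<close>, is a sum of manifestly nonnegative terms plus a multiple of
  \<open>(1 - \<eta>\<^sup>2)(1 + \<eta>\<^sup>n) n - 4\<eta>(1 - \<eta>\<^sup>n)\<close>; this last quantity is nonnegative because
  it is \<open>\<alpha>\<^sub>n / (1 - \<eta>\<^sup>n)\<close> and \<open>\<alpha>\<^sub>n \<ge> \<alpha>\<^sub>0 = 0\<close> by the monotonicity of \<open>\<alpha>\<close>.
\<close>

lemma mono_on_atLeastAtMost_SucI:
  fixes f :: "nat \<Rightarrow> 'a::preorder"
  assumes "\<And>k. k < n \<Longrightarrow> f k \<le> f (Suc k)"
  shows "mono_on {0..n} f"
proof (rule mono_onI)
  fix r s :: nat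
  assume "r \<in> {0..n}" "s \<in> {0..n}" "r \<le> s"
  then have "s \<le> n" by simp
  from \<open>r \<le> s\<close> this show "f r \<le> f s"
  proof (induction s rule: dec_induct)
    case (step m)
    then show ?case using assms[of m] order_trans by fastforce
  qed simp
qed

lemma alpha_seq_Suc_minus:
  fixes e :: real
  assumes "k < n"
  shows "alpha_seq e n (Suc k) - alpha_seq e n k
    = (1 - e^n) * (1 - e) * ((1 + e) * (1 + e * e^k * e^(n - Suc k)) - 2 * e * (e^k + e^(n - Suc k)))"
proof -
  obtain m where n: "n = Suc k + m" using assms less_imp_Suc_add by blast
  have "n - k = Suc m" "n - Suc k = m" using n by auto
  moreover have "e^n = e * e^k * e^m" by (simp add: n power_add)
  moreover have "e^(2*n) = (e^n)^2" by (rule power_even_eq)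
  ultimately show ?thesis
    unfolding alpha_seq_def by (simp add: power2_eq_square algebra_simps)
qed

lemma two_mult_add_le_mult_one_add:
  fixes e a b :: real
  assumes "0 \<le> e" "e \<le> 1" "0 \<le> a" "a \<le> 1" "0 \<le> b" "b \<le> 1"
  shows "2 * e * (a + b) \<le> (1 + e) * (1 + e * a * b)"
proof -
  have "0 \<le> (1 - e * a) * (1 - e * b)"
    using assms by (intro mult_nonneg_nonneg) (auto simp: mult_le_one)
  moreover have "0 \<le> e * ((1 - a) * (1 - b))"
    using assms by (intro mult_nonneg_nonneg) auto
  ultimately show ?thesis by (simp add: algebra_simps)
qed

lemma alpha_seq_le_Suc:
  fixes e :: real
  assumes "0 \<le> e" "e \<le> 1" "k < n"
  shows "alpha_seq e n k \<le> alpha_seq e n (Suc k)"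
proof -
  have factor: "0 \<le> (1 - e^n) * (1 - e)"
    using assms by (simp add: power_le_one)
  have "2 * e * (e^k + e^(n - Suc k)) \<le> (1 + e) * (1 + e * e^k * e^(n - Suc k))"
    using assms by (intro two_mult_add_le_mult_one_add) (simp_all add: power_le_one)
  then have "0 \<le> alpha_seq e n (Suc k) - alpha_seq e n k"
    unfolding alpha_seq_Suc_minus[OF \<open>k < n\<close>] by (intro mult_nonneg_nonneg[OF factor]) simp
  then show ?thesis by simp
qed

lemma alpha_seq_mono_on:
  fixes e :: real
  assumes "0 \<le> e" "e \<le> 1"
  shows "mono_on {0..n} (alpha_seq e n)"
  using assms by (intro mono_on_atLeastAtMost_SucI alpha_seq_le_Suc)

lemma alpha_seq_0 [simp]: "alpha_seq e n 0 = 0"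
  by (simp add: alpha_seq_def)

lemma alpha_seq_self:
  fixes e :: real
  shows "alpha_seq e n n = (1 - e^n) * ((1 - e^2) * (1 + e^n) * real n - 4 * e * (1 - e^n))"
  unfolding alpha_seq_def power_even_eq by (simp add: power2_eq_square algebra_simps)

lemma four_mult_one_minus_power_le:
  fixes e :: real
  assumes "0 < e" "e < 1" "n \<ge> 1"
  shows "4 * e * (1 - e^n) \<le> (1 - e^2) * (1 + e^n) * real n"
proof -
  have "alpha_seq e n 0 \<le> alpha_seq e n n"
    using assms by (intro mono_onD[OF alpha_seq_mono_on]) auto
  then have "0 \<le> (1 - e^n) * ((1 - e^2) * (1 + e^n) * real n - 4 * e * (1 - e^n))"
    by (simp only: alpha_seq_0 alpha_seq_self)
  moreover have "e^n < 1" using assms by (simp add: power_less_one_iff)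
  ultimately show ?thesis by (simp add: zero_le_mult_iff)
qed

lemma beta_seq_Suc_minus:
  fixes e :: real
  assumes "e \<noteq> 0"
  shows "(beta_seq e n (Suc k) - beta_seq e n k) * (e^Suc k * (1 + e^n))
    = (1 - e) * (e * (1 - e^n)^2 * (2 * (e^Suc k - e^n) * (1 - e^k) + e^k * (1 - e) * (1 - e^n))
        + (1 - e^Suc (2*k)) * ((1 - e^2) * (1 + e^n) * real n - 4 * e * (1 - e^n)))"
proof -
  define a where "a = e^k"
  define p where "p = e^n"
  have "a \<noteq> 0" using assms by (simp add: a_def)
  have negative_powers: "e powi (- int k) = 1 / a" "e powi (- int (Suc k)) = 1 / (e * a)"
      "e powi (1 - int k) = e / a" "e powi (1 - int (Suc k)) = 1 / a"
    using assms by (simp_all add: a_def power_int_diff power_int_minus field_simps)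
  have powers: "e^Suc k = e * a" "e^Suc (2*k) = e * a * a" "e^k = a" "e^n = p"
    by (simp_all add: a_def p_def mult_2 power_add)
  show ?thesis
    unfolding beta_seq_def negative_powers powers using assms \<open>a \<noteq> 0\<close>
    by (simp add: field_simps power2_eq_square)
qed

lemma beta_seq_le_Suc:
  fixes e :: real
  assumes "0 < e" "e \<le> 1" "k < n"
    and bound: "4 * e * (1 - e^n) \<le> (1 - e^2) * (1 + e^n) * real n"
  shows "beta_seq e n k \<le> beta_seq e n (Suc k)"
proof -
  have "e^n \<le> e^Suc k" using assms by (intro power_decreasing) auto
  moreover have "e^k \<le> 1" "e^n \<le> 1" "e^Suc (2*k) \<le> 1"
    using assms by (simp_all only: power_le_one less_imp_le)
  ultimately have "0 \<le> (beta_seq e n (Suc k) - beta_seq e n k) * (e^Suc k * (1 + e^n))"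
    unfolding beta_seq_Suc_minus[OF less_imp_neq[OF \<open>0 < e\<close>, symmetric]]
    using assms by (intro mult_nonneg_nonneg add_nonneg_nonneg) simp_all
  moreover have "0 < e^Suc k * (1 + e^n)" using assms by (simp add: add_pos_pos)
  ultimately show ?thesis by (simp add: zero_le_mult_iff)
qed

lemma beta_seq_mono_on:
  fixes e :: real
  assumes "0 < e" "e < 1" "n \<ge> 1"
  shows "mono_on {0..n} (beta_seq e n)"
  using assms four_mult_one_minus_power_le[OF assms]
  by (intro mono_on_atLeastAtMost_SucI beta_seq_le_Suc) auto

theorem mainTheorem18:
  fixes \<gamma> h :: real and n :: nat
  assumes "\<gamma> > 0" and "h > 0" and "n \<ge> 1"
  defines "\<eta> \<equiv> exp (- \<gamma> * h)"
  shows "mono_on {0..n} (alpha_seq \<eta> n) \<and> mono_on {0..n} (beta_seq \<eta> n)"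
proof -
  have "0 < \<eta>" "\<eta> < 1" using assms by (simp_all add: \<eta>_def)
  then show ?thesis
    using alpha_seq_mono_on beta_seq_mono_on \<open>n \<ge> 1\<close> by simp
qed

end
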